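(* Fix a finite number $E$ of observed environments $\mathcal{E}_{obs}=\{1,\dots,E\}$ and take the collection of environments of interest to be $\mathcal{E}=\mathcal{E}_{obs}$, with $p(e)$ the uniform distribution on $\mathcal{E}_{obs}$. In the setting described in the context, assume: (Invariance) there exists $z^*\in\{0,1\}^p$ such that $p_e(y\mid x^{z^*})$ is the same for all $e\in\mathcal{E}_{obs}$; (Uniqueness) this $z^*$ is unique; (Prior positivity) $p(z^* )>0$; (Estimation consistency given fixed environments) for every $z$ with $p(z)>0$, as $n\to\infty$, $$\frac{1}{nE}\sum_{i=1}^n\sum_{e=1}^E\log\hat p_e(y_{ei}\mid x_{ei}^z)\xrightarrow{P}\mathbb{E}_{p(e)p_e(y,x^z)}[\log p_e(y\mid x^z)],\qquad \frac{1}{nE}\sum_{i=1}^n\sum_{e=1}^E\log\hat g(y_{ei}\mid x_{ei}^z)\xrightarrow{P}\mathbb{E}_{p(e)p_e(y,x^z)}[\log g(y\mid x^z)];$$ (Finite variance) for every $z$ with $p(z)>0$, $\mathrm{Var}_{p(e)p_e(y,x^z)}\big(\log p_e(y\mid x^z)-\log g(y\mid x^z)\big)<\infty$. Let $\kappa\in(0,1)$ be fixed. Then there exists a sequence $\epsilon_{n,E}=O(R\,e^{-\kappa nE\mu_{\min}})$ such that $P\big(\mathrm{TV}(\hat p(z\mid\mathcal{D}),\delta_{z^*}(z))>\epsilon_{n,E}\big)\to 0$ as $n\to\infty$, where $R:=\Big(\max_{z\neq z^*}\frac{p(z)}{p(z^* )}\Big)\cdot|\mathrm{supp}\,p(z)|$,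 $\mu(z):=\mathbb{E}_{p(e)p_e(x^z)}\big[\mathrm{KL}(p_e(y\mid x^z)\,\|\,g(y\mid x^z))\big]$ and $\mu_{\min}:=\min_{z\neq z^*,\,p(z)>0}\mu(z)$.
   Context: Features $x\in\mathbb{R}^p$, outcome $y$. For $z\in\{0,1\}^p$, $x^z$ is the subvector of coordinates $j$ with $z^{(j)}=1$ and $x^{-z}$ the rest. Each environment $e$ has a joint density $p_e(x,y)$, from which $p_e(x^z)$, $p_e(y\mid x^z)$ are derived. The pooled conditional is $g(y\mid x^z):=\frac{\sum_{e=1}^E\int p_e(x,y)\,\mathrm{d}x^{-z}}{\sum_{e=1}^E p_e(x^z)}$. Data: in each environment $e=1,\dots,E$, $n$ i.i.d. observations $(x_{ei},y_{ei})$ from $p_e(x,y)$; $\mathcal{D}$ is all data. A prior $p(z)$ on $\{0,1\}^p$ is given. For each $z$ a model class $\mathcal{P}_{y\mid x^z}$ is fixed; $\hat p_e(y\mid x^z)$ maximizes $\sum_{i=1}^n\log\tilde p(y_{ei}\mid x_{ei}^z)$ and $\hat g(y\mid x^z)$ maximizes $\sum_{e=1}^E\sum_{i=1}^n\log\tilde p(y_{ei}\mid x_{ei}^z)$ over $\tilde p\in\mathcal{P}_{y\mid x^z}$. The estimated BIP posterior is $\hat p(z\mid\mathcal{D})\propto p(z)\prod_{e=1}^E\prod_{i=1}^n\frac{\hat g(y_{ei}\mid x_{ei}^z)}{\hat p_e(y_{ei}\mid x_{ei}^z)}$. $\delta_{z^*}$ is the point mass at $z^*$ and $\mathrm{TV}(\hat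 p(z\mid\mathcal{D}),\delta_{z^*})=1-\hat p(z^*\mid\mathcal{D})$. *)

theory Defs
  imports "HOL-Probability.Probability" "HOL-Library.Landau_Symbols"
begin

(* A feature vector x in R^p is a function nat => real, an element of the
   product space PiM {..<p} (\<lambda>_. lborel).  A selection z in {0,1}^p is
   represented by the subset z \<subseteq> {..<p} of selected coordinates; x^z is
   restrict x z (an element of PiM z) and x^{-z} lives in PiM ({..<p} - z). *)

type_synonym feat = "nat \<Rightarrow> real"
type_synonym cdens = "feat \<Rightarrow> real \<Rightarrow> real"

definition featM :: "nat set \<Rightarrow> feat measure" where
  "featM I = PiM I (\<lambda>_. lborel)"

(* p_e(x^z, y): integrate p_e(x,y) over x^{-z}; f is the joint density p_e(x,y) *)
definition joint_xzy :: "nat \<Rightarrow> (feat \<times> real \<Rightarrow> real) \<Rightarrow> nat set \<Rightarrow> feat \<Rightarrow> real \<Rightarrow> real" where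
  "joint_xzy p f z xz y =
     (\<integral>w. f (merge z ({..<p} - z) (xz, w), y) \<partial>featM ({..<p} - z))"

definition marg_xz :: "nat \<Rightarrow> (feat \<times> real \<Rightarrow> real) \<Rightarrow> nat set \<Rightarrow> feat \<Rightarrow> real" where
  "marg_xz p f z xz =
     (\<integral>v. f (merge z ({..<p} - z) (xz, fst v), snd v) \<partial>(featM ({..<p} - z) \<Otimes>\<^sub>M lborel))"

definition cond_yxz :: "nat \<Rightarrow> (feat \<times> real \<Rightarrow> real) \<Rightarrow> nat set \<Rightarrow> feat \<Rightarrow> real \<Rightarrow> real" where
  "cond_yxz p f z xz y = joint_xzy p f z xz y / marg_xz p f z xz"

definition pooled_cond :: "nat \<Rightarrow> nat \<Rightarrow> (nat \<Rightarrow> feat \<times> real \<Rightarrow> real) \<Rightarrow> nat set \<Rightarrow> feat \<Rightarrow> real \<Rightarrow> real" where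
  "pooled_cond p E f z xz y =
     (\<Sum>e\<in>{1..E}. joint_xzy p (f e) z xz y) / (\<Sum>e\<in>{1..E}. marg_xz p (f e) z xz)"

(* Invariance: p_e(y|x^z) is the same for all environments (wherever the
   conditionals are defined, i.e. the x^z-marginals are positive; almost everywhere) *)
definition invariant :: "nat \<Rightarrow> nat \<Rightarrow> (nat \<Rightarrow> feat \<times> real \<Rightarrow> real) \<Rightarrow> nat set \<Rightarrow> bool" where
  "invariant p E f z \<longleftrightarrow>
     (\<forall>e\<in>{1..E}. \<forall>e'\<in>{1..E}. AE v in featM z \<Otimes>\<^sub>M lborel.
        (0 < marg_xz p (f e) z (fst v) \<and> 0 < marg_xz p (f e') z (fst v)) \<longrightarrow>
        cond_yxz p (f e) z (fst v) (snd v) = cond_yxz p (f e') z (fst v) (snd v))"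

definition exp_log_cond :: "nat \<Rightarrow> nat \<Rightarrow> (nat \<Rightarrow> feat \<times> real \<Rightarrow> real) \<Rightarrow> nat set \<Rightarrow> real" where
  "exp_log_cond p E f z = (1 / real E) * (\<Sum>e\<in>{1..E}.
     \<integral>v. joint_xzy p (f e) z (fst v) (snd v) * ln (cond_yxz p (f e) z (fst v) (snd v))
       \<partial>(featM z \<Otimes>\<^sub>M lborel))"

definition exp_log_pooled :: "nat \<Rightarrow> nat \<Rightarrow> (nat \<Rightarrow> feat \<times> real \<Rightarrow> real) \<Rightarrow> nat set \<Rightarrow> real" where
  "exp_log_pooled p E f z = (1 / real E) * (\<Sum>e\<in>{1..E}.
     \<integral>v. joint_xzy p (f e) z (fst v) (snd v) * ln (pooled_cond p E f z (fst v) (snd v))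
       \<partial>(featM z \<Otimes>\<^sub>M lborel))"

definition KL_cond :: "nat \<Rightarrow> nat \<Rightarrow> (nat \<Rightarrow> feat \<times> real \<Rightarrow> real) \<Rightarrow> nat \<Rightarrow> nat set \<Rightarrow> feat \<Rightarrow> real" where
  "KL_cond p E f e z xz =
     (\<integral>y. cond_yxz p (f e) z xz y * ln (cond_yxz p (f e) z xz y / pooled_cond p E f z xz y) \<partial>lborel)"

definition mu :: "nat \<Rightarrow> nat \<Rightarrow> (nat \<Rightarrow> feat \<times> real \<Rightarrow> real) \<Rightarrow> nat set \<Rightarrow> real" where
  "mu p E f z = (1 / real E) * (\<Sum>e\<in>{1..E}.
     \<integral>xz. marg_xz p (f e) z xz * KL_cond p E f e z xz \<partial>featM z)"

definition logx :: "real \<Rightarrow> ereal" where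
  "logx t = (if 0 < t then ereal (ln t) else -\<infinity>)"

definition conv_in_prob :: "'a measure \<Rightarrow> (nat \<Rightarrow> 'a \<Rightarrow> ereal) \<Rightarrow> real \<Rightarrow> bool" where
  "conv_in_prob M Z c \<longleftrightarrow>
     (\<forall>\<epsilon>>0. (\<lambda>n. measure M {\<omega> \<in> space M. ereal \<epsilon> < \<bar>Z n \<omega> - ereal c\<bar>}) \<longlonglongrightarrow> 0)"

definition post_weight :: "nat \<Rightarrow> (nat set \<Rightarrow> real) \<Rightarrow> (nat \<Rightarrow> nat \<Rightarrow> 'a \<Rightarrow> feat \<times> real)
    \<Rightarrow> (nat \<Rightarrow> nat set \<Rightarrow> nat \<Rightarrow> 'a \<Rightarrow> cdens) \<Rightarrow> (nat \<Rightarrow> nat set \<Rightarrow> 'a \<Rightarrow> cdens)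
    \<Rightarrow> nat \<Rightarrow> nat set \<Rightarrow> 'a \<Rightarrow> real" where
  "post_weight E prior Xd phat ghat n z \<omega> =
     prior z * (\<Prod>e\<in>{1..E}. \<Prod>i<n.
        ghat n z \<omega> (restrict (fst (Xd e i \<omega>)) z) (snd (Xd e i \<omega>)) /
        phat n z e \<omega> (restrict (fst (Xd e i \<omega>)) z) (snd (Xd e i \<omega>)))"

definition post_hat :: "nat \<Rightarrow> nat \<Rightarrow> (nat set \<Rightarrow> real) \<Rightarrow> (nat \<Rightarrow> nat \<Rightarrow> 'a \<Rightarrow> feat \<times> real)
    \<Rightarrow> (nat \<Rightarrow> nat set \<Rightarrow> nat \<Rightarrow> 'a \<Rightarrow> cdens) \<Rightarrow> (nat \<Rightarrow> nat set \<Rightarrow> 'a \<Rightarrow> cdens)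
    \<Rightarrow> nat \<Rightarrow> nat set \<Rightarrow> 'a \<Rightarrow> real" where
  "post_hat p E prior Xd phat ghat n z \<omega> =
     post_weight E prior Xd phat ghat n z \<omega> /
     (\<Sum>z'\<in>Pow {..<p}. post_weight E prior Xd phat ghat n z' \<omega>)"

definition prior_supp :: "nat \<Rightarrow> (nat set \<Rightarrow> real) \<Rightarrow> nat set set" where
  "prior_supp p prior = {z \<in> Pow {..<p}. 0 < prior z}"

definition Rconst :: "nat \<Rightarrow> (nat set \<Rightarrow> real) \<Rightarrow> nat set \<Rightarrow> real" where
  "Rconst p prior zs =
     Max {prior z / prior zs | z. z \<subseteq> {..<p} \<and> z \<noteq> zs} * real (card (prior_supp p prior))"

definition mu_min :: "nat \<Rightarrow> nat \<Rightarrow> (nat \<Rightarrow> feat \<times> real \<Rightarrow> real) \<Rightarrow> (nat set \<Rightarrow> real) \<Rightarrow> nat set \<Rightarrow> real" where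
  "mu_min p E f prior zs = Min (mu p E f ` {z \<in> prior_supp p prior. z \<noteq> zs})"

end

theory Submission
  imports Defs
begin

(* By the consistency hypotheses, with probability tending to 1 every averaged log-likelihood
   (1/(nE)) sum log p_e-hat and (1/(nE)) sum log g-hat, for every z in the support of the prior,
   lies within delta of its limit.  On that event the posterior odds of z against zs are
   p(z)/p(zs) exp(nE(mu(zs) - mu(z) +- 4 delta)): by Fubini, the difference of the two limits
   is mu(z), the expected KL divergence from p_e(y | x^z) to the pooled g(y | x^z).  Invariance
   of zs makes the pooled conditional equal to every p_e(y | x^zs), so mu(zs) = 0.  Summing the
   odds, 1 - p-hat(zs | D) <= sum over z <> zs of p(z)/p(zs) exp(-nE(mu(z) - 4 delta)), and
   delta = (1 - kappa) mu_min / 4 gives the rate R exp(-kappa nE mu_min). *)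

lemma sigma_finite_featM: "finite I \<Longrightarrow> sigma_finite_measure (featM I)"
  unfolding featM_def
  by (rule product_sigma_finite.sigma_finite) (simp add: product_sigma_finite_def lborel.sigma_finite_measure_axioms)

lemma measurable_merge_featM:
  "z \<subseteq> {..<p} \<Longrightarrow>
    merge z ({..<p} - z) \<in> measurable (featM z \<Otimes>\<^sub>M featM ({..<p} - z)) (featM {..<p})"
  using measurable_merge[of z "{..<p} - z" "\<lambda>_. lborel"] unfolding featM_def
  by (simp add: Un_absorb1)

locale joint_density =
  fixes p :: nat and g :: "feat \<times> real \<Rightarrow> real"
  assumes nonneg: "\<And>v. 0 \<le> g v"
    and integrable: "integrable (featM {..<p} \<Otimes>\<^sub>M lborel) g"
begin

lemma measurable_density[measurable]: "g \<in> borel_measurable (featM {..<p} \<Otimes>\<^sub>M borel)"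
  using integrable by simp

lemma measurable_merged_density:
  assumes z: "z \<subseteq> {..<p}"
  shows "(\<lambda>(xz, w, y). g (merge z ({..<p} - z) (xz, w), y))
    \<in> borel_measurable (featM z \<Otimes>\<^sub>M (featM ({..<p} - z) \<Otimes>\<^sub>M lborel))"
  using measurable_merge_featM[OF z] by measurable

lemma nn_integral_merged_density:
  assumes z: "z \<subseteq> {..<p}"
  shows "(\<integral>\<^sup>+xz. \<integral>\<^sup>+(w, y). ennreal (g (merge z ({..<p} - z) (xz, w), y))
      \<partial>(featM ({..<p} - z) \<Otimes>\<^sub>M lborel) \<partial>featM z)
    = (\<integral>\<^sup>+v. ennreal (g v) \<partial>(featM {..<p} \<Otimes>\<^sub>M lborel))"
proof -
  let ?W = "{..<p} - z"
  interpret PS: product_sigma_finite "\<lambda>_::nat. lborel::real measure"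
    by (simp add: product_sigma_finite_def lborel.sigma_finite_measure_axioms)
  have "(\<integral>\<^sup>+xz. \<integral>\<^sup>+(w, y). ennreal (g (merge z ?W (xz, w), y)) \<partial>(featM ?W \<Otimes>\<^sub>M lborel) \<partial>featM z)
      = (\<integral>\<^sup>+xz. \<integral>\<^sup>+w. \<integral>\<^sup>+y. ennreal (g (merge z ?W (xz, w), y)) \<partial>lborel \<partial>featM ?W \<partial>featM z)"
  proof (rule nn_integral_cong)
    fix xz assume "xz \<in> space (featM z)"
    from measurable_Pair2[OF measurable_merged_density[OF z] this]
    have "(\<lambda>(w, y). ennreal (g (merge z ?W (xz, w), y))) \<in> borel_measurable (featM ?W \<Otimes>\<^sub>M lborel)"
      by (simp add: case_prod_beta')
    from lborel.nn_integral_fst[OF this]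
    show "(\<integral>\<^sup>+(w, y). ennreal (g (merge z ?W (xz, w), y)) \<partial>(featM ?W \<Otimes>\<^sub>M lborel))
      = (\<integral>\<^sup>+w. \<integral>\<^sup>+y. ennreal (g (merge z ?W (xz, w), y)) \<partial>lborel \<partial>featM ?W)"
      by (simp add: case_prod_beta')
  qed
  also have "\<dots> = (\<integral>\<^sup>+x. \<integral>\<^sup>+y. ennreal (g (x, y)) \<partial>lborel \<partial>featM {..<p})"
  proof -
    have zW: "z \<union> ?W = {..<p}" using z by auto
    have "(\<lambda>x. \<integral>\<^sup>+y. ennreal (g (x, y)) \<partial>lborel) \<in> borel_measurable (featM {..<p})"
      by (intro lborel.borel_measurable_nn_integral_fst[where f="\<lambda>v. ennreal (g v)", simplified]) measurable
    with PS.product_nn_integral_fold[of z ?W "\<lambda>x. \<integral>\<^sup>+y. ennreal (g (x, y)) \<partial>lborel"]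
    show ?thesis
      using finite_subset[OF z] unfolding featM_def zW by simp
  qed
  also have "\<dots> = (\<integral>\<^sup>+v. ennreal (g v) \<partial>(featM {..<p} \<Otimes>\<^sub>M lborel))"
    by (intro lborel.nn_integral_fst) measurable
  finally show ?thesis .
qed

lemma AE_integrable_section:
  assumes z: "z \<subseteq> {..<p}"
  shows "AE xz in featM z. integrable (featM ({..<p} - z) \<Otimes>\<^sub>M lborel)
     (\<lambda>(w, y). g (merge z ({..<p} - z) (xz, w), y))"
proof -
  let ?W = "{..<p} - z"
  interpret W: sigma_finite_measure "featM ?W \<Otimes>\<^sub>M lborel"
    by (intro sigma_finite_pair_measure sigma_finite_featM lborel.sigma_finite_measure_axioms) simp
  have "(\<integral>\<^sup>+v. ennreal (g v) \<partial>(featM {..<p} \<Otimes>\<^sub>M lborel)) < \<infinity>"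
    using integrable nonneg by (simp add: integrable_iff_bounded)
  then have "AE xz in featM z.
      (\<integral>\<^sup>+(w, y). ennreal (g (merge z ?W (xz, w), y)) \<partial>(featM ?W \<Otimes>\<^sub>M lborel)) \<noteq> \<infinity>"
    unfolding nn_integral_merged_density[OF z, symmetric]
    by (intro nn_integral_PInf_AE W.borel_measurable_nn_integral)
      (use measurable_merged_density[OF z] in \<open>auto simp: case_prod_beta'\<close>)
  then show ?thesis
  proof (rule AE_mp[OF _ AE_I2], intro impI)
    fix xz assume "xz \<in> space (featM z)"
      and "(\<integral>\<^sup>+(w, y). ennreal (g (merge z ?W (xz, w), y)) \<partial>(featM ?W \<Otimes>\<^sub>M lborel)) \<noteq> \<infinity>"
    with measurable_Pair2[OF measurable_merged_density[OF z]] nonneg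
    show "integrable (featM ?W \<Otimes>\<^sub>M lborel) (\<lambda>(w, y). g (merge z ?W (xz, w), y))"
      by (simp add: integrable_iff_bounded top.not_eq_extremum case_prod_beta')
  qed
qed

lemma measurable_joint_xzy:
  assumes z: "z \<subseteq> {..<p}"
  shows "(\<lambda>v. joint_xzy p g z (fst v) (snd v)) \<in> borel_measurable (featM z \<Otimes>\<^sub>M lborel)"
proof -
  interpret W: sigma_finite_measure "featM ({..<p} - z)" by (simp add: sigma_finite_featM)
  show ?thesis
    unfolding joint_xzy_def using measurable_merge_featM[OF z] by measurable
qed

lemma measurable_marg_xz:
  assumes z: "z \<subseteq> {..<p}"
  shows "marg_xz p g z \<in> borel_measurable (featM z)"
proof -
  interpret WY: sigma_finite_measure "featM ({..<p} - z) \<Otimes>\<^sub>M lborel"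
    by (intro sigma_finite_pair_measure sigma_finite_featM lborel.sigma_finite_measure_axioms) simp
  show ?thesis
    unfolding marg_xz_def[abs_def] using measurable_merge_featM[OF z] by measurable
qed

lemma joint_xzy_nonneg: "0 \<le> joint_xzy p g z xz y"
  unfolding joint_xzy_def by (simp add: nonneg)

lemma marg_xz_nonneg: "0 \<le> marg_xz p g z xz"
  unfolding marg_xz_def by (simp add: nonneg)

lemma AE_integral_joint_xzy:
  assumes z: "z \<subseteq> {..<p}"
  shows "AE xz in featM z. integrable lborel (joint_xzy p g z xz)
    \<and> (\<integral>y. joint_xzy p g z xz y \<partial>lborel) = marg_xz p g z xz"
  using AE_integrable_section[OF z]
proof (rule eventually_mono)
  interpret W: sigma_finite_measure "featM ({..<p} - z)" by (simp add: sigma_finite_featM)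
  interpret WY: pair_sigma_finite "featM ({..<p} - z)" lborel ..
  fix xz assume "integrable (featM ({..<p} - z) \<Otimes>\<^sub>M lborel) (\<lambda>(w, y). g (merge z ({..<p} - z) (xz, w), y))"
  from WY.integrable_snd[OF this] WY.integral_snd[OF this]
  show "integrable lborel (joint_xzy p g z xz) \<and> (\<integral>y. joint_xzy p g z xz y \<partial>lborel) = marg_xz p g z xz"
    unfolding joint_xzy_def[abs_def] marg_xz_def by (simp add: case_prod_beta')
qed

lemma AE_joint_xzy_eq_0_if_marg_xz_eq_0:
  assumes z: "z \<subseteq> {..<p}"
  shows "AE xz in featM z. marg_xz p g z xz = 0 \<longrightarrow> (AE y in lborel. joint_xzy p g z xz y = 0)"
  using AE_integral_joint_xzy[OF z]
  by (rule eventually_mono) (auto simp: integral_nonneg_eq_0_iff_AE joint_xzy_nonneg)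

end

lemma sum_divide_sum_eq_common_ratio:
  fixes J m :: "'i \<Rightarrow> real"
  assumes "finite S" "e \<in> S" "0 < m e" "\<And>e'. e' \<in> S \<Longrightarrow> 0 \<le> m e'"
    and zero: "\<And>e'. e' \<in> S \<Longrightarrow> m e' = 0 \<Longrightarrow> J e' = 0"
    and ratio: "\<And>e'. e' \<in> S \<Longrightarrow> 0 < m e' \<Longrightarrow> J e / m e = J e' / m e'"
  shows "sum J S / sum m S = J e / m e"
proof -
  have "J e' = m e' * (J e / m e)" if "e' \<in> S" for e'
    using zero[OF that] ratio[OF that] assms(4)[OF that] by (cases "m e' = 0") (auto simp: field_simps)
  then have "sum J S = sum m S * (J e / m e)"
    unfolding sum_distrib_right by (rule sum.cong[OF refl])
  moreover have "m e \<le> sum m S"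
    using assms(1,2,4) by (intro member_le_sum) auto
  ultimately show ?thesis using \<open>0 < m e\<close> by simp
qed

lemma mult_ln_diff_eq_KL_term:
  fixes x m q :: real
  assumes "0 \<le> x" "0 < m" "0 < x \<Longrightarrow> 0 < q"
  shows "x * ln (x / m) - x * ln q = m * (x / m * ln (x / m / q))"
  using assms by (cases "x = 0") (auto simp: ln_div ln_mult algebra_simps)

locale environment_densities =
  fixes p E :: nat and f :: "nat \<Rightarrow> feat \<times> real \<Rightarrow> real"
  assumes density: "\<And>e. e \<in> {1..E} \<Longrightarrow> joint_density p (f e)"
begin

lemma joint_xzy_nonneg: "e \<in> {1..E} \<Longrightarrow> 0 \<le> joint_xzy p (f e) z xz y"
  using joint_density.joint_xzy_nonneg[OF density] .

lemma marg_xz_nonneg: "e \<in> {1..E} \<Longrightarrow> 0 \<le> marg_xz p (f e) z xz"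
  using joint_density.marg_xz_nonneg[OF density] .

lemma pooled_cond_pos:
  assumes e: "e \<in> {1..E}"
    and "0 < marg_xz p (f e) z xz" "0 < joint_xzy p (f e) z xz y"
  shows "0 < pooled_cond p E f z xz y"
proof -
  have "joint_xzy p (f e) z xz y \<le> (\<Sum>e'\<in>{1..E}. joint_xzy p (f e') z xz y)"
    "marg_xz p (f e) z xz \<le> (\<Sum>e'\<in>{1..E}. marg_xz p (f e') z xz)"
    using e by (auto intro!: member_le_sum simp: joint_xzy_nonneg marg_xz_nonneg)
  with assms(2,3) show ?thesis
    unfolding pooled_cond_def by simp
qed

context
  fixes z :: "nat set" assumes z: "z \<subseteq> {..<p}"
begin

lemma measurable_joint_xzy[measurable]:
  "e \<in> {1..E} \<Longrightarrow> (\<lambda>v. joint_xzy p (f e) z (fst v) (snd v)) \<in> borel_measurable (featM z \<Otimes>\<^sub>M lborel)"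
  using joint_density.measurable_joint_xzy[OF density z] .

lemma measurable_marg_xz[measurable]:
  "e \<in> {1..E} \<Longrightarrow> marg_xz p (f e) z \<in> borel_measurable (featM z)"
  using joint_density.measurable_marg_xz[OF density z] .

lemma measurable_cond_yxz[measurable]:
  "e \<in> {1..E} \<Longrightarrow> (\<lambda>v. cond_yxz p (f e) z (fst v) (snd v)) \<in> borel_measurable (featM z \<Otimes>\<^sub>M lborel)"
  unfolding cond_yxz_def by measurable

lemma measurable_pooled_cond[measurable]:
  "(\<lambda>v. pooled_cond p E f z (fst v) (snd v)) \<in> borel_measurable (featM z \<Otimes>\<^sub>M lborel)"
  unfolding pooled_cond_def by measurable

lemma measurable_KL_cond[measurable]:
  "e \<in> {1..E} \<Longrightarrow> KL_cond p E f e z \<in> borel_measurable (featM z)"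
  unfolding KL_cond_def[abs_def] by measurable

lemma AE_integral_log_ratio_eq_marg_KL:
  assumes e: "e \<in> {1..E}"
  shows "AE xz in featM z.
    (\<integral>y. joint_xzy p (f e) z xz y * ln (cond_yxz p (f e) z xz y)
        - joint_xzy p (f e) z xz y * ln (pooled_cond p E f z xz y) \<partial>lborel)
    = marg_xz p (f e) z xz * KL_cond p E f e z xz"
  using joint_density.AE_joint_xzy_eq_0_if_marg_xz_eq_0[OF density[OF e] z]
proof (rule eventually_mono)
  fix xz assume zero: "marg_xz p (f e) z xz = 0 \<longrightarrow> (AE y in lborel. joint_xzy p (f e) z xz y = 0)"
  show "(\<integral>y. joint_xzy p (f e) z xz y * ln (cond_yxz p (f e) z xz y)
        - joint_xzy p (f e) z xz y * ln (pooled_cond p E f z xz y) \<partial>lborel)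
    = marg_xz p (f e) z xz * KL_cond p E f e z xz"
  proof (cases "marg_xz p (f e) z xz = 0")
    case True
    with zero show ?thesis
      by (auto intro!: integral_eq_zero_AE elim: eventually_mono)
  next
    case False
    then have m: "0 < marg_xz p (f e) z xz"
      using marg_xz_nonneg[OF e] by (simp add: order_less_le)
    have "joint_xzy p (f e) z xz y * ln (cond_yxz p (f e) z xz y)
        - joint_xzy p (f e) z xz y * ln (pooled_cond p E f z xz y)
      = marg_xz p (f e) z xz * (cond_yxz p (f e) z xz y
          * ln (cond_yxz p (f e) z xz y / pooled_cond p E f z xz y))" for y
      unfolding cond_yxz_def
      by (rule mult_ln_diff_eq_KL_term[OF joint_xzy_nonneg[OF e] m])
        (rule pooled_cond_pos[OF e m])
    then show ?thesis unfolding KL_cond_def by simp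
  qed
qed

lemma integral_log_ratio_eq_integral_KL:
  assumes e: "e \<in> {1..E}"
    and int_cond: "integrable (featM z \<Otimes>\<^sub>M lborel)
      (\<lambda>v. joint_xzy p (f e) z (fst v) (snd v) * ln (cond_yxz p (f e) z (fst v) (snd v)))"
    and int_pooled: "integrable (featM z \<Otimes>\<^sub>M lborel)
      (\<lambda>v. joint_xzy p (f e) z (fst v) (snd v) * ln (pooled_cond p E f z (fst v) (snd v)))"
  shows "(\<integral>v. joint_xzy p (f e) z (fst v) (snd v) * ln (cond_yxz p (f e) z (fst v) (snd v))
        \<partial>(featM z \<Otimes>\<^sub>M lborel))
      - (\<integral>v. joint_xzy p (f e) z (fst v) (snd v) * ln (pooled_cond p E f z (fst v) (snd v))
        \<partial>(featM z \<Otimes>\<^sub>M lborel))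
    = (\<integral>xz. marg_xz p (f e) z xz * KL_cond p E f e z xz \<partial>featM z)"
proof -
  interpret Z: sigma_finite_measure "featM z"
    using z by (intro sigma_finite_featM) (rule finite_subset, auto)
  interpret ZY: pair_sigma_finite "featM z" lborel ..
  have "(\<integral>v. joint_xzy p (f e) z (fst v) (snd v) * ln (cond_yxz p (f e) z (fst v) (snd v))
        \<partial>(featM z \<Otimes>\<^sub>M lborel))
      - (\<integral>v. joint_xzy p (f e) z (fst v) (snd v) * ln (pooled_cond p E f z (fst v) (snd v))
        \<partial>(featM z \<Otimes>\<^sub>M lborel))
    = (\<integral>xz. \<integral>y. joint_xzy p (f e) z xz y * ln (cond_yxz p (f e) z xz y)
        - joint_xzy p (f e) z xz y * ln (pooled_cond p E f z xz y) \<partial>lborel \<partial>featM z)"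
    using ZY.integral_fst'[OF Bochner_Integration.integrable_diff[OF int_cond int_pooled]]
      int_cond int_pooled by simp
  also have "\<dots> = (\<integral>xz. marg_xz p (f e) z xz * KL_cond p E f e z xz \<partial>featM z)"
    using AE_integral_log_ratio_eq_marg_KL[OF e] e by (intro integral_cong_AE) measurable
  finally show ?thesis .
qed

lemma exp_log_cond_minus_exp_log_pooled:
  assumes "\<And>e. e \<in> {1..E} \<Longrightarrow> integrable (featM z \<Otimes>\<^sub>M lborel)
      (\<lambda>v. joint_xzy p (f e) z (fst v) (snd v) * ln (cond_yxz p (f e) z (fst v) (snd v)))"
    and "\<And>e. e \<in> {1..E} \<Longrightarrow> integrable (featM z \<Otimes>\<^sub>M lborel)
      (\<lambda>v. joint_xzy p (f e) z (fst v) (snd v) * ln (pooled_cond p E f z (fst v) (snd v)))"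
  shows "exp_log_cond p E f z - exp_log_pooled p E f z = mu p E f z"
proof -
  have "(\<Sum>e\<in>{1..E}. \<integral>v. joint_xzy p (f e) z (fst v) (snd v) * ln (cond_yxz p (f e) z (fst v) (snd v))
        \<partial>(featM z \<Otimes>\<^sub>M lborel))
      - (\<Sum>e\<in>{1..E}. \<integral>v. joint_xzy p (f e) z (fst v) (snd v) * ln (pooled_cond p E f z (fst v) (snd v))
        \<partial>(featM z \<Otimes>\<^sub>M lborel))
    = (\<Sum>e\<in>{1..E}. \<integral>xz. marg_xz p (f e) z xz * KL_cond p E f e z xz \<partial>featM z)"
    unfolding sum_subtractf[symmetric]
    by (intro sum.cong refl integral_log_ratio_eq_integral_KL assms)
  then show ?thesis
    unfolding exp_log_cond_def exp_log_pooled_def mu_def by (simp add: diff_divide_distrib[symmetric])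
qed

lemma AE_pooled_cond_eq_cond_yxz_if_invariant:
  assumes inv: "invariant p E f z" and e: "e \<in> {1..E}"
  shows "AE xz in featM z. 0 < marg_xz p (f e) z xz \<longrightarrow>
    (AE y in lborel. pooled_cond p E f z xz y = cond_yxz p (f e) z xz y)"
proof -
  interpret Z: sigma_finite_measure "featM z"
    using z by (intro sigma_finite_featM) (rule finite_subset, auto)
  interpret ZY: pair_sigma_finite "featM z" lborel ..
  have "AE v in featM z \<Otimes>\<^sub>M lborel. \<forall>e'\<in>{1..E}.
      0 < marg_xz p (f e) z (fst v) \<and> 0 < marg_xz p (f e') z (fst v) \<longrightarrow>
      cond_yxz p (f e) z (fst v) (snd v) = cond_yxz p (f e') z (fst v) (snd v)"
    using inv e unfolding invariant_def by (intro AE_finite_allI) auto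
  then have common: "AE xz in featM z. AE y in lborel. \<forall>e'\<in>{1..E}.
      0 < marg_xz p (f e) z xz \<and> 0 < marg_xz p (f e') z xz \<longrightarrow>
      cond_yxz p (f e) z xz y = cond_yxz p (f e') z xz y"
    using ZY.AE_pair by fastforce
  have zero: "AE xz in featM z. \<forall>e'\<in>{1..E}.
      marg_xz p (f e') z xz = 0 \<longrightarrow> (AE y in lborel. joint_xzy p (f e') z xz y = 0)"
    by (intro AE_finite_allI finite_atLeastAtMost)
      (rule joint_density.AE_joint_xzy_eq_0_if_marg_xz_eq_0[OF density z])
  from common zero show ?thesis
  proof eventually_elim
    case (elim xz)
    show ?case
    proof
      assume m: "0 < marg_xz p (f e) z xz"
      have "AE y in lborel. \<forall>e'\<in>{1..E}. marg_xz p (f e') z xz = 0 \<longrightarrow> joint_xzy p (f e') z xz y = 0"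
        using elim(2) by (intro AE_finite_allI) (auto elim: eventually_mono)
      with elim(1) show "AE y in lborel. pooled_cond p E f z xz y = cond_yxz p (f e) z xz y"
      proof eventually_elim
        case (elim y)
        show ?case
          unfolding pooled_cond_def cond_yxz_def
          by (rule sum_divide_sum_eq_common_ratio[where m="\<lambda>e'. marg_xz p (f e') z xz", OF _ e m])
            (use elim m in \<open>auto simp: marg_xz_nonneg cond_yxz_def\<close>)
      qed
    qed
  qed
qed

lemma mu_eq_0_if_invariant:
  assumes inv: "invariant p E f z"
  shows "mu p E f z = 0"
proof -
  have "(\<integral>xz. marg_xz p (f e) z xz * KL_cond p E f e z xz \<partial>featM z) = 0" if e: "e \<in> {1..E}" for e
    using AE_pooled_cond_eq_cond_yxz_if_invariant[OF inv e]
  proof (intro integral_eq_zero_AE, eventually_elim)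
    case (elim xz)
    show ?case
    proof (cases "0 < marg_xz p (f e) z xz")
      case True
      with elim have "KL_cond p E f e z xz = 0"
        unfolding KL_cond_def by (auto intro!: integral_eq_zero_AE elim: eventually_mono)
      then show ?thesis by simp
    qed (use marg_xz_nonneg[OF e] in \<open>simp add: order_less_le\<close>)
  qed
  then show ?thesis unfolding mu_def by simp
qed

end

end

lemma sum_logx:
  assumes "finite I"
  shows "(\<Sum>i\<in>I. logx (a i)) = (if \<forall>i\<in>I. 0 < a i then ereal (\<Sum>i\<in>I. ln (a i)) else -\<infinity>)"
  using assms by (induction I rule: finite_induct) (auto simp: logx_def)

lemma sum_logx_eq_ereal:
  assumes "finite I" "(\<Sum>i\<in>I. logx (a i)) = ereal r"
  shows "\<forall>i\<in>I. 0 < a i" and "(\<Sum>i\<in>I. ln (a i)) = r"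
  using assms by (simp_all add: sum_logx split: if_splits)

lemma ereal_close_imp_real:
  fixes x :: ereal
  assumes "\<not> ereal \<delta> < \<bar>x - ereal c\<bar>"
  obtains a where "x = ereal a" "\<bar>a - c\<bar> \<le> \<delta>"
  using assms by (cases x) auto

(* The averaged log-likelihood (1/(nE)) sum_i sum_e log q_e(y_ei | x_ei^z) of a fit q that has one
   conditional per environment; the pooled fit g-hat is the case of a q constant in e. *)

definition avg_loglik :: "nat \<Rightarrow> (nat \<Rightarrow> nat \<Rightarrow> 'a \<Rightarrow> feat \<times> real) \<Rightarrow> nat set
    \<Rightarrow> (nat \<Rightarrow> 'a \<Rightarrow> cdens) \<Rightarrow> nat \<Rightarrow> 'a \<Rightarrow> ereal" where
  "avg_loglik E Xd z q n \<omega> = ereal (1 / (real n * real E)) *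
     (\<Sum>i<n. \<Sum>e\<in>{1..E}. logx (q e \<omega> (restrict (fst (Xd e i \<omega>)) z) (snd (Xd e i \<omega>))))"

lemma avg_loglik_eq_ereal:
  assumes "0 < n" "0 < E" "avg_loglik E Xd z q n \<omega> = ereal a"
  shows "\<forall>i<n. \<forall>e\<in>{1..E}. 0 < q e \<omega> (restrict (fst (Xd e i \<omega>)) z) (snd (Xd e i \<omega>))"
    and "(\<Sum>i<n. \<Sum>e\<in>{1..E}. ln (q e \<omega> (restrict (fst (Xd e i \<omega>)) z) (snd (Xd e i \<omega>))))
      = real n * real E * a"
proof -
  let ?l = "\<lambda>(i, e). q e \<omega> (restrict (fst (Xd e i \<omega>)) z) (snd (Xd e i \<omega>))"
  have sum_logx_pairs: "(\<Sum>i<n. \<Sum>e\<in>{1..E}. logx (q e \<omega> (restrict (fst (Xd e i \<omega>)) z) (snd (Xd e i \<omega>))))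
      = (\<Sum>v\<in>{..<n} \<times> {1..E}. logx (?l v))"
    and sum_ln_pairs: "(\<Sum>i<n. \<Sum>e\<in>{1..E}. ln (q e \<omega> (restrict (fst (Xd e i \<omega>)) z) (snd (Xd e i \<omega>))))
      = (\<Sum>v\<in>{..<n} \<times> {1..E}. ln (?l v))"
    by (simp_all add: sum.cartesian_product case_prod_beta')
  have c: "0 < real n * real E" using assms by simp
  obtain r where r: "(\<Sum>v\<in>{..<n} \<times> {1..E}. logx (?l v)) = ereal r" "a = r / (real n * real E)"
    using assms c unfolding avg_loglik_def sum_logx_pairs
    by (cases "\<Sum>v\<in>{..<n} \<times> {1..E}. logx (?l v)") (auto simp: field_simps)
  from sum_logx_eq_ereal[OF _ r(1)] c r(2) show
    "\<forall>i<n. \<forall>e\<in>{1..E}. 0 < q e \<omega> (restrict (fst (Xd e i \<omega>)) z) (snd (Xd e i \<omega>))"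
    "(\<Sum>i<n. \<Sum>e\<in>{1..E}. ln (q e \<omega> (restrict (fst (Xd e i \<omega>)) z) (snd (Xd e i \<omega>))))
      = real n * real E * a"
    unfolding sum_ln_pairs by auto
qed

lemma measurable_avg_loglik:
  assumes "\<And>e i. e \<in> {1..E} \<Longrightarrow> i < n \<Longrightarrow>
    (\<lambda>\<omega>. q e \<omega> (restrict (fst (Xd e i \<omega>)) z) (snd (Xd e i \<omega>))) \<in> borel_measurable M"
  shows "avg_loglik E Xd z q n \<in> borel_measurable M"
proof -
  have [measurable]: "logx \<in> borel_measurable borel"
    unfolding logx_def by measurable
  have [measurable]: "(\<lambda>\<omega>. logx (q e \<omega> (restrict (fst (Xd e i \<omega>)) z) (snd (Xd e i \<omega>))))
      \<in> borel_measurable M" if "e \<in> {1..E}" "i \<in> {..<n}" for e i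
    using measurable_compose[OF assms, of e i logx] that by simp
  show ?thesis
    unfolding avg_loglik_def[abs_def] by measurable
qed

lemma post_weight_eq_exp:
  assumes "0 < n" "0 < E"
    and g: "avg_loglik E Xd z (\<lambda>_. ghat n z) n \<omega> = ereal a"
    and p: "avg_loglik E Xd z (phat n z) n \<omega> = ereal b"
  shows "post_weight E prior Xd phat ghat n z \<omega> = prior z * exp (real n * real E * (a - b))"
proof -
  let ?g = "\<lambda>e i. ghat n z \<omega> (restrict (fst (Xd e i \<omega>)) z) (snd (Xd e i \<omega>))"
  let ?p = "\<lambda>e i. phat n z e \<omega> (restrict (fst (Xd e i \<omega>)) z) (snd (Xd e i \<omega>))"
  note G = avg_loglik_eq_ereal[OF assms(1,2) g] and P = avg_loglik_eq_ereal[OF assms(1,2) p]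
  have "(\<Prod>e\<in>{1..E}. \<Prod>i<n. ?g e i / ?p e i) = (\<Prod>e\<in>{1..E}. \<Prod>i<n. exp (ln (?g e i) - ln (?p e i)))"
    using G(1) P(1) by (intro prod.cong refl) (simp add: exp_diff)
  also have "\<dots> = exp (\<Sum>e\<in>{1..E}. \<Sum>i<n. ln (?g e i) - ln (?p e i))"
    by (simp add: exp_sum)
  also have "(\<Sum>e\<in>{1..E}. \<Sum>i<n. ln (?g e i) - ln (?p e i)) = real n * real E * (a - b)"
    unfolding sum_subtractf by (subst (1 2) sum.swap) (use G(2) P(2) in \<open>simp add: right_diff_distrib\<close>)
  finally show ?thesis unfolding post_weight_def by (simp only:)
qed

lemma post_weight_eq_exp_if_close:
  assumes "0 < n" "0 < E"
    and "\<not> ereal \<delta> < \<bar>avg_loglik E Xd z (phat n z) n \<omega> - ereal (cp z)\<bar>"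
    and "\<not> ereal \<delta> < \<bar>avg_loglik E Xd z (\<lambda>_. ghat n z) n \<omega> - ereal (cg z)\<bar>"
  obtains d where "post_weight E prior Xd phat ghat n z \<omega> = prior z * exp (real n * real E * d)"
    and "\<bar>d - (cg z - cp z)\<bar> \<le> 2 * \<delta>"
proof -
  obtain b where b: "avg_loglik E Xd z (phat n z) n \<omega> = ereal b" "\<bar>b - cp z\<bar> \<le> \<delta>"
    using assms(3) by (rule ereal_close_imp_real)
  obtain a where a: "avg_loglik E Xd z (\<lambda>_. ghat n z) n \<omega> = ereal a" "\<bar>a - cg z\<bar> \<le> \<delta>"
    using assms(4) by (rule ereal_close_imp_real)
  show ?thesis
    using post_weight_eq_exp[where ghat=ghat and phat=phat, OF assms(1,2) a(1) b(1)] a(2) b(2)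
    by (intro that[of "a - b"]) auto
qed

lemma one_minus_normalized_le_sum_ratios:
  fixes w :: "'z \<Rightarrow> real"
  assumes "finite P" "zs \<in> P" "0 < w zs" "\<And>z. z \<in> P \<Longrightarrow> 0 \<le> w z"
  shows "1 - w zs / sum w P \<le> (\<Sum>z\<in>P - {zs}. w z / w zs)"
    and "1 - w zs / sum w P \<le> 1"
proof -
  have split: "sum w P = w zs + sum w (P - {zs})"
    using assms(1,2) by (simp add: sum.remove)
  have rest: "0 \<le> sum w (P - {zs})"
    using assms(4) by (intro sum_nonneg) auto
  have "1 - w zs / sum w P = sum w (P - {zs}) / (w zs + sum w (P - {zs}))"
    using assms(3) rest by (simp add: split field_simps)
  also have "\<dots> \<le> sum w (P - {zs}) / w zs"
    using assms(3) rest by (intro divide_left_mono) auto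
  finally show "1 - w zs / sum w P \<le> (\<Sum>z\<in>P - {zs}. w z / w zs)"
    by (simp add: sum_divide_distrib)
  show "1 - w zs / sum w P \<le> 1"
    using assms(3) rest by (simp add: split)
qed

lemma one_minus_post_hat_le:
  fixes cp cg :: "nat set \<Rightarrow> real"
  assumes "0 < n" "0 < E"
    and prior_nonneg: "\<And>z. z \<subseteq> {..<p} \<Longrightarrow> 0 \<le> prior z"
    and zs: "zs \<in> prior_supp p prior"
    and close_p: "\<And>z. z \<in> prior_supp p prior \<Longrightarrow>
      \<not> ereal \<delta> < \<bar>avg_loglik E Xd z (phat n z) n \<omega> - ereal (cp z)\<bar>"
    and close_g: "\<And>z. z \<in> prior_supp p prior \<Longrightarrow>
      \<not> ereal \<delta> < \<bar>avg_loglik E Xd z (\<lambda>_. ghat n z) n \<omega> - ereal (cg z)\<bar>"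
  shows "1 - post_hat p E prior Xd phat ghat n zs \<omega> \<le> (\<Sum>z\<in>prior_supp p prior - {zs}.
      prior z / prior zs * exp (real n * real E * (4 * \<delta> - ((cp z - cg z) - (cp zs - cg zs)))))"
    and "1 - post_hat p E prior Xd phat ghat n zs \<omega> \<le> 1"
proof -
  let ?S = "prior_supp p prior"
  let ?w = "\<lambda>z. post_weight E prior Xd phat ghat n z \<omega>"
  have "\<exists>d. ?w z = prior z * exp (real n * real E * d) \<and> \<bar>d - (cg z - cp z)\<bar> \<le> 2 * \<delta>"
    if "z \<in> ?S" for z
    using post_weight_eq_exp_if_close[where prior=prior and phat=phat and ghat=ghat and cp=cp and cg=cg,
        OF assms(1,2) close_p[OF that] close_g[OF that]] by metis
  then obtain d where d: "\<And>z. z \<in> ?S \<Longrightarrow> ?w z = prior z * exp (real n * real E * d z)"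
    "\<And>z. z \<in> ?S \<Longrightarrow> \<bar>d z - (cg z - cp z)\<bar> \<le> 2 * \<delta>"
    by metis
  have w_pos: "0 < ?w z" if "z \<in> ?S" for z
    using d(1)[OF that] that by (simp add: prior_supp_def)
  have w_zero: "?w z = 0" if "z \<in> Pow {..<p} - ?S" for z
    using that prior_nonneg[of z] by (auto simp: prior_supp_def post_weight_def)
  have w_nonneg: "0 \<le> ?w z" if "z \<in> Pow {..<p}" for z
    using w_pos[of z] w_zero[of z] that by (cases "z \<in> ?S") auto
  have zs_Pow: "zs \<in> Pow {..<p}"
    using zs by (simp add: prior_supp_def)
  note normalized = one_minus_normalized_le_sum_ratios[where w="?w",
      OF finite_Pow_iff[THEN iffD2, OF finite_lessThan] zs_Pow w_pos[OF zs] w_nonneg]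
  have "(\<Sum>z\<in>Pow {..<p} - {zs}. ?w z / ?w zs) = (\<Sum>z\<in>?S - {zs}. ?w z / ?w zs)"
    using w_zero by (intro sum.mono_neutral_right) (auto simp: prior_supp_def)
  also have "\<dots> \<le> (\<Sum>z\<in>?S - {zs}.
      prior z / prior zs * exp (real n * real E * (4 * \<delta> - ((cp z - cg z) - (cp zs - cg zs)))))"
  proof (rule sum_mono)
    fix z assume z: "z \<in> ?S - {zs}"
    have "d z - d zs \<le> 4 * \<delta> - ((cp z - cg z) - (cp zs - cg zs))"
      using d(2)[of z] d(2)[OF zs] z by (simp add: abs_le_iff)
    then have exp_le: "exp (real n * real E * (d z - d zs))
        \<le> exp (real n * real E * (4 * \<delta> - ((cp z - cg z) - (cp zs - cg zs))))"
      by (simp add: mult_left_mono)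
    have "?w z / ?w zs = prior z / prior zs * exp (real n * real E * (d z - d zs))"
      using z zs by (simp add: d(1) exp_diff right_diff_distrib)
    also have "\<dots> \<le> prior z / prior zs
        * exp (real n * real E * (4 * \<delta> - ((cp z - cg z) - (cp zs - cg zs))))"
      using z zs exp_le by (intro mult_left_mono) (auto simp: prior_supp_def)
    finally show "?w z / ?w zs
        \<le> prior z / prior zs * exp (real n * real E * (4 * \<delta> - ((cp z - cg z) - (cp zs - cg zs))))" .
  qed
  finally show "1 - post_hat p E prior Xd phat ghat n zs \<omega> \<le> (\<Sum>z\<in>?S - {zs}.
      prior z / prior zs * exp (real n * real E * (4 * \<delta> - ((cp z - cg z) - (cp zs - cg zs)))))"
    using normalized(1) unfolding post_hat_def by simp
  show "1 - post_hat p E prior Xd phat ghat n zs \<omega> \<le> 1"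
    using normalized(2) unfolding post_hat_def by simp
qed

definition far_event :: "'a measure \<Rightarrow> real \<Rightarrow> (nat \<Rightarrow> 'a \<Rightarrow> ereal) \<Rightarrow> real \<Rightarrow> nat \<Rightarrow> 'a set" where
  "far_event M \<delta> Z c n = {\<omega> \<in> space M. ereal \<delta> < \<bar>Z n \<omega> - ereal c\<bar>}"

lemma sets_far_event:
  assumes "Z n \<in> borel_measurable M"
  shows "far_event M \<delta> Z c n \<in> sets M"
proof -
  have [measurable]: "(\<lambda>\<omega>. \<bar>Z n \<omega> - ereal c\<bar>) \<in> borel_measurable M"
    using assms by (intro borel_measurable_ereal_abs borel_measurable_ereal_diff) auto
  show ?thesis
    unfolding far_event_def by measurable
qed

lemma conv_in_prob_far_event:
  "conv_in_prob M Z c \<Longrightarrow> 0 < \<delta> \<Longrightarrow> (\<lambda>n. measure M (far_event M \<delta> Z c n)) \<longlonglongrightarrow> 0"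
  unfolding conv_in_prob_def far_event_def by blast

lemma (in finite_measure) tendsto_measure_UN_0:
  assumes "finite I" "\<And>i n. i \<in> I \<Longrightarrow> A i n \<in> sets M"
    and "\<And>i. i \<in> I \<Longrightarrow> (\<lambda>n. measure M (A i n)) \<longlonglongrightarrow> 0"
  shows "(\<lambda>n. measure M (\<Union>i\<in>I. A i n)) \<longlonglongrightarrow> 0"
proof (rule tendsto_sandwich[OF _ _ tendsto_const])
  show "\<forall>\<^sub>F n in sequentially. measure M (\<Union>i\<in>I. A i n) \<le> (\<Sum>i\<in>I. measure M (A i n))"
    using assms(1,2) by (intro always_eventually allI finite_measure_subadditive_finite) auto
  show "(\<lambda>n. \<Sum>i\<in>I. measure M (A i n)) \<longlonglongrightarrow> 0"
    using tendsto_sum[of I "\<lambda>i n. measure M (A i n)" "\<lambda>_. 0"] assms(3) by simp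
qed simp

lemma (in finite_measure) tendsto_measure_Un_0:
  assumes "\<And>n. A n \<in> sets M" "\<And>n. B n \<in> sets M"
    and "(\<lambda>n. measure M (A n)) \<longlonglongrightarrow> 0" "(\<lambda>n. measure M (B n)) \<longlonglongrightarrow> 0"
  shows "(\<lambda>n. measure M (A n \<union> B n)) \<longlonglongrightarrow> 0"
  by (intro tendsto_sandwich[OF _ _ tendsto_const tendsto_add_zero[OF assms(3,4)]]
      always_eventually allI measure_Un_le assms(1,2)) auto

lemma post_hat_tail_subset_far_events:
  fixes cp cg :: "nat set \<Rightarrow> real"
  assumes "0 < n" "0 < E"
    and prior_nonneg: "\<And>z. z \<subseteq> {..<p} \<Longrightarrow> 0 \<le> prior z"
    and zs: "zs \<in> prior_supp p prior"
    and \<epsilon>: "(\<Sum>z\<in>prior_supp p prior - {zs}. prior z / prior zs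
      * exp (real n * real E * (4 * \<delta> - ((cp z - cg z) - (cp zs - cg zs))))) \<le> \<epsilon> \<or> 1 \<le> \<epsilon>"
  shows "{\<omega> \<in> space M. 1 - post_hat p E prior Xd phat ghat n zs \<omega> > \<epsilon>}
    \<subseteq> (\<Union>z\<in>prior_supp p prior. far_event M \<delta> (\<lambda>n. avg_loglik E Xd z (phat n z) n) (cp z) n
      \<union> far_event M \<delta> (\<lambda>n. avg_loglik E Xd z (\<lambda>_. ghat n z) n) (cg z) n)"
proof safe
  fix \<omega> assume \<omega>: "\<omega> \<in> space M" and tail: "1 - post_hat p E prior Xd phat ghat n zs \<omega> > \<epsilon>"
  show "\<omega> \<in> (\<Union>z\<in>prior_supp p prior. far_event M \<delta> (\<lambda>n. avg_loglik E Xd z (phat n z) n) (cp z) n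
      \<union> far_event M \<delta> (\<lambda>n. avg_loglik E Xd z (\<lambda>_. ghat n z) n) (cg z) n)"
  proof (rule ccontr)
    assume "\<omega> \<notin> (\<Union>z\<in>prior_supp p prior. far_event M \<delta> (\<lambda>n. avg_loglik E Xd z (phat n z) n) (cp z) n
      \<union> far_event M \<delta> (\<lambda>n. avg_loglik E Xd z (\<lambda>_. ghat n z) n) (cg z) n)"
    with \<omega> have "\<And>z. z \<in> prior_supp p prior \<Longrightarrow>
        \<not> ereal \<delta> < \<bar>avg_loglik E Xd z (phat n z) n \<omega> - ereal (cp z)\<bar>"
      "\<And>z. z \<in> prior_supp p prior \<Longrightarrow>
        \<not> ereal \<delta> < \<bar>avg_loglik E Xd z (\<lambda>_. ghat n z) n \<omega> - ereal (cg z)\<bar>"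
      unfolding far_event_def by auto
    from one_minus_post_hat_le[where phat=phat and ghat=ghat and cp=cp and cg=cg,
        OF assms(1,2) prior_nonneg zs this] \<epsilon> tail
    show False by linarith
  qed
qed

lemma post_hat_tail_tendsto_0:
  fixes cp cg :: "nat set \<Rightarrow> real" and \<epsilon> :: "nat \<Rightarrow> real"
  assumes M: "prob_space M" and E: "0 < E" and \<delta>: "0 < \<delta>"
    and prior_nonneg: "\<And>z. z \<subseteq> {..<p} \<Longrightarrow> 0 \<le> prior z"
    and zs: "zs \<in> prior_supp p prior"
    and meas_p: "\<And>n z. z \<in> prior_supp p prior \<Longrightarrow> avg_loglik E Xd z (phat n z) n \<in> borel_measurable M"
    and meas_g: "\<And>n z. z \<in> prior_supp p prior \<Longrightarrow> avg_loglik E Xd z (\<lambda>_. ghat n z) n \<in> borel_measurable M"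
    and conv_p: "\<And>z. z \<in> prior_supp p prior \<Longrightarrow>
      conv_in_prob M (\<lambda>n. avg_loglik E Xd z (phat n z) n) (cp z)"
    and conv_g: "\<And>z. z \<in> prior_supp p prior \<Longrightarrow>
      conv_in_prob M (\<lambda>n. avg_loglik E Xd z (\<lambda>_. ghat n z) n) (cg z)"
    and \<epsilon>: "\<And>n. 0 < n \<Longrightarrow> (\<Sum>z\<in>prior_supp p prior - {zs}. prior z / prior zs
      * exp (real n * real E * (4 * \<delta> - ((cp z - cg z) - (cp zs - cg zs))))) \<le> \<epsilon> n \<or> 1 \<le> \<epsilon> n"
  shows "(\<lambda>n. measure M {\<omega> \<in> space M. 1 - post_hat p E prior Xd phat ghat n zs \<omega> > \<epsilon> n}) \<longlonglongrightarrow> 0"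
proof -
  interpret prob_space M by (rule M)
  let ?S = "prior_supp p prior"
  let ?far = "\<lambda>z n. far_event M \<delta> (\<lambda>n. avg_loglik E Xd z (phat n z) n) (cp z) n
    \<union> far_event M \<delta> (\<lambda>n. avg_loglik E Xd z (\<lambda>_. ghat n z) n) (cg z) n"
  have far_sets: "?far z n \<in> sets M" if "z \<in> ?S" for z n
    using that by (intro sets.Un sets_far_event meas_p meas_g)
  have far_lim: "(\<lambda>n. measure M (\<Union>z\<in>?S. ?far z n)) \<longlonglongrightarrow> 0"
    using \<delta> by (intro tendsto_measure_UN_0 far_sets tendsto_measure_Un_0 sets_far_event
        meas_p meas_g conv_in_prob_far_event conv_p conv_g) (auto simp: prior_supp_def)
  have tail_le: "\<forall>\<^sub>F n in sequentially.
      measure M {\<omega> \<in> space M. 1 - post_hat p E prior Xd phat ghat n zs \<omega> > \<epsilon> n}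
      \<le> measure M (\<Union>z\<in>?S. ?far z n)"
    using eventually_gt_at_top[of 0]
  proof eventually_elim
    case (elim n)
    have "(\<Union>z\<in>?S. ?far z n) \<in> sets M"
      using far_sets by (intro sets.finite_UN) (auto simp: prior_supp_def)
    with post_hat_tail_subset_far_events[where M=M and Xd=Xd and phat=phat and ghat=ghat,
        OF elim E prior_nonneg zs \<epsilon>[OF elim]]
    show ?case by (rule finite_measure_mono)
  qed
  show ?thesis
    by (rule tendsto_sandwich[OF _ tail_le tendsto_const far_lim]) simp
qed

lemma sum_weighted_exp_le:
  fixes r \<mu> :: "'z \<Rightarrow> real"
  assumes "\<And>z. z \<in> T \<Longrightarrow> 0 \<le> r z" "\<And>z. z \<in> T \<Longrightarrow> m \<le> \<mu> z" "0 \<le> t"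
  shows "(\<Sum>z\<in>T. r z * exp (t * (a - \<mu> z))) \<le> sum r T * exp (t * (a - m))"
proof -
  have "r z * exp (t * (a - \<mu> z)) \<le> r z * exp (t * (a - m))" if "z \<in> T" for z
    using assms(1,2)[OF that] assms(3) by (intro mult_left_mono) (auto intro: mult_left_mono)
  then show ?thesis
    unfolding sum_distrib_right by (rule sum_mono)
qed

(* The alternative 1 <= eps n covers the degenerate case m <= 0, in which the total variation
   distance is bounded trivially. *)
lemma exists_exponential_tail_bound:
  fixes r \<mu> :: "'z \<Rightarrow> real" and m \<kappa> c R :: real
  assumes \<kappa>: "0 < \<kappa>" "\<kappa> < 1" and c: "0 \<le> c"
    and r: "\<And>z. z \<in> T \<Longrightarrow> 0 \<le> r z"
    and R: "T \<noteq> {} \<Longrightarrow> sum r T \<le> R \<and> 0 < R"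
    and m: "\<And>z. z \<in> T \<Longrightarrow> m \<le> \<mu> z"
  shows "\<exists>\<epsilon> \<delta>. 0 < \<delta> \<and> \<epsilon> \<in> O(\<lambda>n. R * exp (- \<kappa> * real n * c * m)) \<and>
    (\<forall>n. (\<Sum>z\<in>T. r z * exp (real n * c * (4 * \<delta> - \<mu> z))) \<le> \<epsilon> n \<or> 1 \<le> \<epsilon> n)"
proof (cases "T = {}")
  case True
  then show ?thesis
    by (intro exI[of _ "\<lambda>_. 0"] exI[of _ 1]) auto
next
  case False
  with R have R: "sum r T \<le> R" "0 < R" by auto
  show ?thesis
  proof (cases "0 < m")
    case True
    define \<delta> where "\<delta> = (1 - \<kappa>) * m / 4"
    have "(\<Sum>z\<in>T. r z * exp (real n * c * (4 * \<delta> - \<mu> z))) \<le> sum r T * exp (real n * c * (4 * \<delta> - m))"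
      for n using r m c by (intro sum_weighted_exp_le) auto
    moreover have "real n * c * (4 * \<delta> - m) = - \<kappa> * real n * c * m" for n
      unfolding \<delta>_def by (simp add: field_simps)
    moreover have "(\<lambda>n. sum r T * exp (- \<kappa> * real n * c * m)) \<in> O(\<lambda>n. R * exp (- \<kappa> * real n * c * m))"
      using R sum_nonneg[of T r] r
      by (intro bigoI[where c=1] always_eventually allI) (simp add: abs_mult mult_right_mono)
    moreover have "0 < \<delta>"
      unfolding \<delta>_def using True \<kappa> by simp
    ultimately show ?thesis by (intro exI[of _ "\<lambda>n. sum r T * exp (- \<kappa> * real n * c * m)"] exI[of _ \<delta>]) simp
  next
    case False
    have "(\<lambda>_. 1) \<in> O(\<lambda>n. R * exp (- \<kappa> * real n * c * m))"
    proof (intro bigoI[where c="1 / R"] always_eventually allI)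
      fix n
      have "0 \<le> - \<kappa> * real n * c * m"
        using False \<kappa> c by (simp add: mult_nonneg_nonpos mult_nonpos_nonpos)
      then show "norm (1::real) \<le> 1 / R * norm (R * exp (- \<kappa> * real n * c * m))"
        using R(2) by (simp add: abs_mult)
    qed
    then show ?thesis by (intro exI[of _ "\<lambda>_. 1"] exI[of _ 1]) auto
  qed
qed

lemma sum_prior_ratio_le_Rconst:
  assumes zs: "zs \<in> prior_supp p prior" and nonempty: "prior_supp p prior - {zs} \<noteq> {}"
  shows "(\<Sum>z\<in>prior_supp p prior - {zs}. prior z / prior zs) \<le> Rconst p prior zs \<and> 0 < Rconst p prior zs"
proof -
  let ?S = "prior_supp p prior"
  let ?Q = "{prior z / prior zs | z. z \<subseteq> {..<p} \<and> z \<noteq> zs}"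
  have "?Q = (\<lambda>z. prior z / prior zs) ` {z \<in> Pow {..<p}. z \<noteq> zs}" by auto
  then have "finite ?Q" by simp
  then have ratio_le: "prior z / prior zs \<le> Max ?Q" if "z \<in> ?S - {zs}" for z
    using that by (intro Max_ge) (auto simp: prior_supp_def)
  obtain z0 where z0: "z0 \<in> ?S - {zs}" using nonempty by blast
  with zs have "0 < prior z0 / prior zs" by (simp add: prior_supp_def)
  with ratio_le[OF z0] have Max_pos: "0 < Max ?Q" by simp
  have fin: "finite ?S" by (simp add: prior_supp_def)
  have "(\<Sum>z\<in>?S - {zs}. prior z / prior zs) \<le> real (card (?S - {zs})) * Max ?Q"
    using ratio_le by (rule sum_bounded_above)
  also have "\<dots> \<le> real (card ?S) * Max ?Q"
    using fin Max_pos by (intro mult_right_mono) (auto intro: card_mono)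
  finally have "(\<Sum>z\<in>?S - {zs}. prior z / prior zs) \<le> Rconst p prior zs"
    unfolding Rconst_def by (simp add: mult.commute)
  moreover have "0 < card ?S"
    using fin zs by (auto simp: card_gt_0_iff)
  ultimately show ?thesis
    using Max_pos unfolding Rconst_def by simp
qed

lemma post_hat_concentrates:
  fixes cp cg \<mu> :: "nat set \<Rightarrow> real"
  assumes M: "prob_space M" and E: "0 < E"
    and prior_nonneg: "\<And>z. z \<subseteq> {..<p} \<Longrightarrow> 0 \<le> prior z"
    and zs: "zs \<in> prior_supp p prior"
    and meas_p: "\<And>n z. z \<in> prior_supp p prior \<Longrightarrow> avg_loglik E Xd z (phat n z) n \<in> borel_measurable M"
    and meas_g: "\<And>n z. z \<in> prior_supp p prior \<Longrightarrow> avg_loglik E Xd z (\<lambda>_. ghat n z) n \<in> borel_measurable M"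
    and conv_p: "\<And>z. z \<in> prior_supp p prior \<Longrightarrow>
      conv_in_prob M (\<lambda>n. avg_loglik E Xd z (phat n z) n) (cp z)"
    and conv_g: "\<And>z. z \<in> prior_supp p prior \<Longrightarrow>
      conv_in_prob M (\<lambda>n. avg_loglik E Xd z (\<lambda>_. ghat n z) n) (cg z)"
    and gap: "\<And>z. z \<in> prior_supp p prior \<Longrightarrow> cp z - cg z = \<mu> z" and gap_zs: "\<mu> zs = 0"
    and \<kappa>: "0 < \<kappa>" "\<kappa> < 1"
    and m: "\<And>z. z \<in> prior_supp p prior - {zs} \<Longrightarrow> m \<le> \<mu> z"
  shows "\<exists>\<epsilon>. \<epsilon> \<in> O(\<lambda>n. Rconst p prior zs * exp (- \<kappa> * real n * real E * m)) \<and>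
    (\<lambda>n. measure M {\<omega> \<in> space M. 1 - post_hat p E prior Xd phat ghat n zs \<omega> > \<epsilon> n}) \<longlonglongrightarrow> 0"
proof -
  let ?S = "prior_supp p prior"
  have "\<exists>\<epsilon> \<delta>. 0 < \<delta> \<and> \<epsilon> \<in> O(\<lambda>n. Rconst p prior zs * exp (- \<kappa> * real n * real E * m))
      \<and> (\<forall>n. (\<Sum>z\<in>?S - {zs}. prior z / prior zs * exp (real n * real E * (4 * \<delta> - \<mu> z)))
        \<le> \<epsilon> n \<or> 1 \<le> \<epsilon> n)"
    using zs sum_prior_ratio_le_Rconst[OF zs] m
    by (intro exists_exponential_tail_bound \<kappa>) (auto simp: prior_supp_def)
  then obtain \<epsilon> \<delta> where \<delta>: "0 < \<delta>"
    and \<epsilon>_O: "\<epsilon> \<in> O(\<lambda>n. Rconst p prior zs * exp (- \<kappa> * real n * real E * m))"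
    and \<epsilon>: "\<And>n. (\<Sum>z\<in>?S - {zs}. prior z / prior zs * exp (real n * real E * (4 * \<delta> - \<mu> z)))
      \<le> \<epsilon> n \<or> 1 \<le> \<epsilon> n"
    by blast
  have "(\<lambda>n. measure M {\<omega> \<in> space M. 1 - post_hat p E prior Xd phat ghat n zs \<omega> > \<epsilon> n}) \<longlonglongrightarrow> 0"
  proof (rule post_hat_tail_tendsto_0[OF M E \<delta> prior_nonneg zs meas_p meas_g conv_p conv_g])
    fix n :: nat
    have "(\<Sum>z\<in>?S - {zs}. prior z / prior zs
        * exp (real n * real E * (4 * \<delta> - ((cp z - cg z) - (cp zs - cg zs)))))
      = (\<Sum>z\<in>?S - {zs}. prior z / prior zs * exp (real n * real E * (4 * \<delta> - \<mu> z)))"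
      by (intro sum.cong refl) (simp add: gap zs gap_zs)
    with \<epsilon>[of n] show "(\<Sum>z\<in>?S - {zs}. prior z / prior zs
        * exp (real n * real E * (4 * \<delta> - ((cp z - cg z) - (cp zs - cg zs))))) \<le> \<epsilon> n \<or> 1 \<le> \<epsilon> n"
      by simp
  qed
  with \<epsilon>_O show ?thesis by blast
qed

lemma environment_densities_if_distributed:
  assumes M: "prob_space M" and nonneg: "\<And>e v. e \<in> {1..E} \<Longrightarrow> 0 \<le> f e v"
    and distr: "\<And>e. e \<in> {1..E} \<Longrightarrow> distributed M (featM {..<p} \<Otimes>\<^sub>M lborel) (X e) (\<lambda>v. ennreal (f e v))"
  shows "environment_densities p E f"
proof (intro environment_densities.intro joint_density.intro)
  fix e assume e: "e \<in> {1..E}"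
  interpret prob_space M by (rule M)
  show "0 \<le> f e v" for v by (rule nonneg[OF e])
  have "integrable (featM {..<p} \<Otimes>\<^sub>M lborel) (\<lambda>v. f e v * 1) \<longleftrightarrow> integrable M (\<lambda>_. 1::real)"
    using nonneg[OF e] by (intro distributed_integrable[OF distr[OF e]]) auto
  then show "integrable (featM {..<p} \<Otimes>\<^sub>M lborel) (f e)" by simp
qed

theorem theorem4:
  fixes M :: "'a measure" and p E :: nat
    and f :: "nat \<Rightarrow> feat \<times> real \<Rightarrow> real"
    and Xd :: "nat \<Rightarrow> nat \<Rightarrow> 'a \<Rightarrow> feat \<times> real"
    and prior :: "nat set \<Rightarrow> real"
    and Pcls :: "nat set \<Rightarrow> cdens set"
    and phat :: "nat \<Rightarrow> nat set \<Rightarrow> nat \<Rightarrow> 'a \<Rightarrow> cdens"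
    and ghat :: "nat \<Rightarrow> nat set \<Rightarrow> 'a \<Rightarrow> cdens"
    and zs :: "nat set" and \<kappa> :: real
  assumes M: "prob_space M"
    and E: "1 \<le> E"
    and dens_nonneg: "\<And>e v. e \<in> {1..E} \<Longrightarrow> 0 \<le> f e v"
    and distr: "\<And>e i. e \<in> {1..E} \<Longrightarrow>
        distributed M (featM {..<p} \<Otimes>\<^sub>M lborel) (Xd e i) (\<lambda>v. ennreal (f e v))"
    and iid: "\<And>e. e \<in> {1..E} \<Longrightarrow>
        prob_space.indep_vars M (\<lambda>_. featM {..<p} \<Otimes>\<^sub>M lborel) (Xd e) UNIV"
    and mle_p: "\<And>n z e \<omega>. z \<subseteq> {..<p} \<Longrightarrow> e \<in> {1..E} \<Longrightarrow> \<omega> \<in> space M \<Longrightarrow>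
        phat n z e \<omega> \<in> Pcls z \<and>
        (\<forall>q\<in>Pcls z.
          (\<Sum>i<n. logx (q (restrict (fst (Xd e i \<omega>)) z) (snd (Xd e i \<omega>))))
          \<le> (\<Sum>i<n. logx (phat n z e \<omega> (restrict (fst (Xd e i \<omega>)) z) (snd (Xd e i \<omega>)))))"
    and mle_g: "\<And>n z \<omega>. z \<subseteq> {..<p} \<Longrightarrow> \<omega> \<in> space M \<Longrightarrow>
        ghat n z \<omega> \<in> Pcls z \<and>
        (\<forall>q\<in>Pcls z.
          (\<Sum>e\<in>{1..E}. \<Sum>i<n. logx (q (restrict (fst (Xd e i \<omega>)) z) (snd (Xd e i \<omega>))))
          \<le> (\<Sum>e\<in>{1..E}. \<Sum>i<n. logx (ghat n z \<omega> (restrict (fst (Xd e i \<omega>)) z) (snd (Xd e i \<omega>)))))"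
    and meas_p: "\<And>n z e i. z \<subseteq> {..<p} \<Longrightarrow> e \<in> {1..E} \<Longrightarrow> i < n \<Longrightarrow>
        (\<lambda>\<omega>. phat n z e \<omega> (restrict (fst (Xd e i \<omega>)) z) (snd (Xd e i \<omega>))) \<in> borel_measurable M"
    and meas_g: "\<And>n z e i. z \<subseteq> {..<p} \<Longrightarrow> e \<in> {1..E} \<Longrightarrow> i < n \<Longrightarrow>
        (\<lambda>\<omega>. ghat n z \<omega> (restrict (fst (Xd e i \<omega>)) z) (snd (Xd e i \<omega>))) \<in> borel_measurable M"
    and prior_nonneg: "\<And>z. z \<subseteq> {..<p} \<Longrightarrow> 0 \<le> prior z"
    and prior_sum: "(\<Sum>z\<in>Pow {..<p}. prior z) = 1"
    and zs_sub: "zs \<subseteq> {..<p}"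
    and invariance: "invariant p E f zs"
    and uniqueness: "\<And>z. z \<subseteq> {..<p} \<Longrightarrow> invariant p E f z \<Longrightarrow> z = zs"
    and prior_pos: "0 < prior zs"
    and cons_p: "\<And>z. z \<subseteq> {..<p} \<Longrightarrow> 0 < prior z \<Longrightarrow>
        (\<forall>e\<in>{1..E}. integrable (featM z \<Otimes>\<^sub>M lborel)
           (\<lambda>v. joint_xzy p (f e) z (fst v) (snd v) * ln (cond_yxz p (f e) z (fst v) (snd v)))) \<and>
        conv_in_prob M
          (\<lambda>n \<omega>. ereal (1 / (real n * real E)) *
             (\<Sum>i<n. \<Sum>e\<in>{1..E}. logx (phat n z e \<omega> (restrict (fst (Xd e i \<omega>)) z) (snd (Xd e i \<omega>)))))
          (exp_log_cond p E f z)"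
    and cons_g: "\<And>z. z \<subseteq> {..<p} \<Longrightarrow> 0 < prior z \<Longrightarrow>
        (\<forall>e\<in>{1..E}. integrable (featM z \<Otimes>\<^sub>M lborel)
           (\<lambda>v. joint_xzy p (f e) z (fst v) (snd v) * ln (pooled_cond p E f z (fst v) (snd v)))) \<and>
        conv_in_prob M
          (\<lambda>n \<omega>. ereal (1 / (real n * real E)) *
             (\<Sum>i<n. \<Sum>e\<in>{1..E}. logx (ghat n z \<omega> (restrict (fst (Xd e i \<omega>)) z) (snd (Xd e i \<omega>)))))
          (exp_log_pooled p E f z)"
    and fin_var: "\<And>z e. z \<subseteq> {..<p} \<Longrightarrow> 0 < prior z \<Longrightarrow> e \<in> {1..E} \<Longrightarrow>
        integrable (featM z \<Otimes>\<^sub>M lborel)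
          (\<lambda>v. joint_xzy p (f e) z (fst v) (snd v) *
               (ln (cond_yxz p (f e) z (fst v) (snd v)) - ln (pooled_cond p E f z (fst v) (snd v)))\<^sup>2)"
    and kappa: "0 < \<kappa>" "\<kappa> < 1"
  shows "\<exists>\<epsilon> :: nat \<Rightarrow> real.
     \<epsilon> \<in> O(\<lambda>n. Rconst p prior zs * exp (- \<kappa> * real n * real E * mu_min p E f prior zs)) \<and>
     (\<lambda>n. measure M {\<omega> \<in> space M. 1 - post_hat p E prior Xd phat ghat n zs \<omega> > \<epsilon> n}) \<longlonglongrightarrow> 0"
proof -
  interpret environment_densities p E f
    using M dens_nonneg distr by (rule environment_densities_if_distributed)
  let ?S = "prior_supp p prior"
  have zs: "zs \<in> ?S"
    using zs_sub prior_pos by (simp add: prior_supp_def)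
  have avg_loglik_measurable:
    "avg_loglik E Xd z (phat n z) n \<in> borel_measurable M"
    "avg_loglik E Xd z (\<lambda>_. ghat n z) n \<in> borel_measurable M" if "z \<in> ?S" for n z
    using that meas_p meas_g by (auto intro!: measurable_avg_loglik simp: prior_supp_def)
  have avg_loglik_consistent:
    "conv_in_prob M (\<lambda>n. avg_loglik E Xd z (phat n z) n) (exp_log_cond p E f z)"
    "conv_in_prob M (\<lambda>n. avg_loglik E Xd z (\<lambda>_. ghat n z) n) (exp_log_pooled p E f z)"
    if "z \<in> ?S" for z
    using that cons_p cons_g unfolding avg_loglik_def[abs_def] by (auto simp: prior_supp_def)
  have gap: "exp_log_cond p E f z - exp_log_pooled p E f z = mu p E f z" if "z \<in> ?S" for z
    using that cons_p cons_g by (intro exp_log_cond_minus_exp_log_pooled) (auto simp: prior_supp_def)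
  have mu_min_le: "mu_min p E f prior zs \<le> mu p E f z" if "z \<in> ?S - {zs}" for z
    using that unfolding mu_min_def by (intro Min_le) (auto simp: prior_supp_def)
  show ?thesis
    using E by (intro post_hat_concentrates[OF M _ prior_nonneg zs avg_loglik_measurable
        avg_loglik_consistent gap mu_eq_0_if_invariant[OF zs_sub invariance] kappa mu_min_le]) auto
qed

end
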